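(* Let $S$ be a semiring and $P$ a left $S$-semimodule. (1) For every left $S$-semimodule $M$, $P$ is $M$-$e$-projective if and only if $P$ is normally $M$-projective. (2) $P$ is $e$-projective if and only if $P$ is normally projective.
   Context: A semiring $(S,+,0,\cdot,1)$ consists of a commutative monoid $(S,+,0)$ and a monoid $(S,\cdot,1)$ with $0\neq 1$, absorbing zero and both distributive laws; left $S$-semimodules and $S$-linear maps are as for modules without subtraction; $\mathrm{Hom}_S(P,X)$ is a commutative monoid under pointwise addition. For an $S$-linear $h:X\to Y$, $\mathrm{Ker}(h)=\{x\mid h(x)=0\}$; $h$ is $k$-normal if $h(x)=h(x')$ implies $x+k=x'+k'$ for some $k,k'\in\mathrm{Ker}(h)$; a normal epimorphism is a surjective $k$-normal map. A short exact sequence $0\to L\xrightarrow{f}M\xrightarrow{g}N\to 0$ (of semimodules or of commutative monoids) means: $f$ injective, $f(L)=\mathrm{Ker}(g)$, $g$ surjective and $k$-normal. $P$ is $M$-$e$-projective if for every short exact sequence $0\to L\xrightarrow{f}M\xrightarrow{g}N\to0$ of left $S$-semimodules (with middle term $M$), the sequence $0\to\mathrm{Hom}_S(P,L)\xrightarrow{f\circ-}\mathrm{Hom}_S(P,M)\xrightarrow{g\circ-}\mathrm{Hom}_S(P,N)\to0$ is a short exact sequence of commutative monoids; $P$ is $e$-projective if it is $M$-$e$-projective for all $M$. $P$ is normally $M$-projective if for every normal epimorphism $f:M\to N$ and every $S$-linear $g:P\to N$ there is an $S$-linear $h:P\to M$ with $f\circ h=g$, and whenever $h':P\to M$ is $S$-linear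 with $f\circ h'=g$, there exist $S$-linear $h_1,h_2:P\to M$ with $f\circ h_1=0=f\circ h_2$ and $h+h_1=h'+h_2$; $P$ is normally projective if normally $M$-projective for all $M$. *)

theory Defs
  imports "HOL-Library.FuncSet"
begin

record 'a cmon =
  car :: "'a set"
  add :: "'a \<Rightarrow> 'a \<Rightarrow> 'a"
  zer :: "'a"

record ('a, 's) semimodule = "'a cmon" +
  smult :: "'s \<Rightarrow> 'a \<Rightarrow> 'a"

definition comm_monoid_on :: "('a, 'z) cmon_scheme \<Rightarrow> bool" where
  "comm_monoid_on A \<longleftrightarrow>
     zer A \<in> car A \<and>
     (\<forall>x\<in>car A. \<forall>y\<in>car A. add A x y \<in> car A) \<and>
     (\<forall>x\<in>car A. \<forall>y\<in>car A. \<forall>z\<in>car A. add A (add A x y) z = add A x (add A y z)) \<and>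
     (\<forall>x\<in>car A. \<forall>y\<in>car A. add A x y = add A y x) \<and>
     (\<forall>x\<in>car A. add A (zer A) x = x)"

definition semimodule :: "('a, 's::semiring_1) semimodule \<Rightarrow> bool" where
  "semimodule M \<longleftrightarrow> comm_monoid_on M \<and>
     (\<forall>s. \<forall>x\<in>car M. smult M s x \<in> car M) \<and>
     (\<forall>s. \<forall>x\<in>car M. \<forall>y\<in>car M. smult M s (add M x y) = add M (smult M s x) (smult M s y)) \<and>
     (\<forall>s t. \<forall>x\<in>car M. smult M (s + t) x = add M (smult M s x) (smult M t x)) \<and>
     (\<forall>s t. \<forall>x\<in>car M. smult M (s * t) x = smult M s (smult M t x)) \<and>
     (\<forall>x\<in>car M. smult M 1 x = x) \<and>
     (\<forall>x\<in>car M. smult M 0 x = zer M) \<and>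
     (\<forall>s. smult M s (zer M) = zer M)"

definition slinear :: "('a, 's) semimodule \<Rightarrow> ('b, 's) semimodule \<Rightarrow> ('a \<Rightarrow> 'b) \<Rightarrow> bool" where
  "slinear M N h \<longleftrightarrow> h \<in> car M \<rightarrow> car N \<and>
     (\<forall>x\<in>car M. \<forall>y\<in>car M. h (add M x y) = add N (h x) (h y)) \<and>
     (\<forall>s. \<forall>x\<in>car M. h (smult M s x) = smult N s (h x))"

definition mon_hom :: "('a, 'z) cmon_scheme \<Rightarrow> ('b, 'w) cmon_scheme \<Rightarrow> ('a \<Rightarrow> 'b) \<Rightarrow> bool" where
  "mon_hom A B h \<longleftrightarrow> h \<in> car A \<rightarrow> car B \<and>
     (\<forall>x\<in>car A. \<forall>y\<in>car A. h (add A x y) = add B (h x) (h y)) \<and> h (zer A) = zer B"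

definition Ker :: "('a, 'z) cmon_scheme \<Rightarrow> ('b, 'w) cmon_scheme \<Rightarrow> ('a \<Rightarrow> 'b) \<Rightarrow> 'a set" where
  "Ker A B h = {x \<in> car A. h x = zer B}"

definition k_normal :: "('a, 'z) cmon_scheme \<Rightarrow> ('b, 'w) cmon_scheme \<Rightarrow> ('a \<Rightarrow> 'b) \<Rightarrow> bool" where
  "k_normal A B h \<longleftrightarrow> (\<forall>x\<in>car A. \<forall>x'\<in>car A. h x = h x' \<longrightarrow>
     (\<exists>k\<in>Ker A B h. \<exists>k'\<in>Ker A B h. add A x k = add A x' k'))"

definition exact_conds :: "('l, 'z1) cmon_scheme \<Rightarrow> ('m, 'z2) cmon_scheme \<Rightarrow> ('n, 'z3) cmon_scheme
     \<Rightarrow> ('l \<Rightarrow> 'm) \<Rightarrow> ('m \<Rightarrow> 'n) \<Rightarrow> bool" where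
  "exact_conds L M N f g \<longleftrightarrow> inj_on f (car L) \<and> f ` car L = Ker M N g \<and>
     g ` car M = car N \<and> k_normal M N g"

definition ses_mon :: "'l cmon \<Rightarrow> 'm cmon \<Rightarrow> 'n cmon \<Rightarrow> ('l \<Rightarrow> 'm) \<Rightarrow> ('m \<Rightarrow> 'n) \<Rightarrow> bool" where
  "ses_mon L M N f g \<longleftrightarrow> comm_monoid_on L \<and> comm_monoid_on M \<and> comm_monoid_on N \<and>
     mon_hom L M f \<and> mon_hom M N g \<and> exact_conds L M N f g"

definition ses_sm :: "('l, 's::semiring_1) semimodule \<Rightarrow> ('m, 's) semimodule \<Rightarrow> ('n, 's) semimodule
     \<Rightarrow> ('l \<Rightarrow> 'm) \<Rightarrow> ('m \<Rightarrow> 'n) \<Rightarrow> bool" where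
  "ses_sm L M N f g \<longleftrightarrow> semimodule L \<and> semimodule M \<and> semimodule N \<and>
     slinear L M f \<and> slinear M N g \<and> exact_conds L M N f g"

definition Hom :: "('p, 's) semimodule \<Rightarrow> ('x, 's) semimodule \<Rightarrow> ('p \<Rightarrow> 'x) cmon" where
  "Hom P X = \<lparr> car = {h. slinear P X h \<and> h \<in> extensional (car P)},
              add = (\<lambda>h k. \<lambda>x\<in>car P. add X (h x) (k x)),
              zer = (\<lambda>x\<in>car P. zer X) \<rparr>"

definition postcomp :: "('p, 's) semimodule \<Rightarrow> ('x \<Rightarrow> 'y) \<Rightarrow> ('p \<Rightarrow> 'x) \<Rightarrow> ('p \<Rightarrow> 'y)" where
  "postcomp P f h = (\<lambda>x\<in>car P. f (h x))"

text \<open>M-e-projectivity; the itself-arguments fix the types in which L and N range.\<close>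
definition M_e_projective :: "'l itself \<Rightarrow> 'n itself \<Rightarrow> ('p, 's::semiring_1) semimodule
     \<Rightarrow> ('m, 's) semimodule \<Rightarrow> bool" where
  "M_e_projective _ _ P M \<longleftrightarrow>
     (\<forall>(L::('l, 's) semimodule) (N::('n, 's) semimodule) f g.
        ses_sm L M N f g \<longrightarrow>
        ses_mon (Hom P L) (Hom P M) (Hom P N) (postcomp P f) (postcomp P g))"

definition e_projective :: "'l itself \<Rightarrow> 'm itself \<Rightarrow> 'n itself \<Rightarrow> ('p, 's::semiring_1) semimodule \<Rightarrow> bool" where
  "e_projective ty_l _ ty_n P \<longleftrightarrow>
     (\<forall>M::('m, 's) semimodule. semimodule M \<longrightarrow> M_e_projective ty_l ty_n P M)"

definition normal_epi :: "('m, 's) semimodule \<Rightarrow> ('n, 's) semimodule \<Rightarrow> ('m \<Rightarrow> 'n) \<Rightarrow> bool" where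
  "normal_epi M N f \<longleftrightarrow> slinear M N f \<and> f ` car M = car N \<and> k_normal M N f"

definition normally_M_projective :: "'n itself \<Rightarrow> ('p, 's::semiring_1) semimodule
     \<Rightarrow> ('m, 's) semimodule \<Rightarrow> bool" where
  "normally_M_projective _ P M \<longleftrightarrow>
     (\<forall>(N::('n, 's) semimodule) f g. semimodule N \<longrightarrow> normal_epi M N f \<longrightarrow> g \<in> car (Hom P N) \<longrightarrow>
        (\<exists>h\<in>car (Hom P M). postcomp P f h = g \<and>
           (\<forall>h'\<in>car (Hom P M). postcomp P f h' = g \<longrightarrow>
              (\<exists>h1\<in>car (Hom P M). \<exists>h2\<in>car (Hom P M).
                 postcomp P f h1 = zer (Hom P N) \<and> postcomp P f h2 = zer (Hom P N) \<and>
                 add (Hom P M) h h1 = add (Hom P M) h' h2))))"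

definition normally_projective :: "'m itself \<Rightarrow> 'n itself \<Rightarrow> ('p, 's::semiring_1) semimodule \<Rightarrow> bool" where
  "normally_projective _ tn P \<longleftrightarrow>
     (\<forall>M::('m, 's) semimodule. semimodule M \<longrightarrow> normally_M_projective tn P M)"

end

theory Submission
  imports Defs
begin

text \<open>Hom(P,-) is left exact for every P: injectivity of f and im f = Ker g transfer
  pointwise to maps out of P, a map into Ker g being pulled back through the injective f.
  Exactness of the Hom sequence therefore reduces to its right end, and for a monoid
  homomorphism, being surjective and k-normal means exactly that each target element has a
  preimage to which every other preimage is congruent modulo the kernel; for postcomposition
  with a normal epimorphism this is the defining property of normal projectivity. Conversely,
  every normal epimorphism M \<rightarrow> N is the right end of the short exact sequence
  0 \<rightarrow> Ker \<rightarrow> M \<rightarrow> N \<rightarrow> 0, whose kernel term has the carrier type of M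
  (hence the type instantiation in the second implication).\<close>

lemma comm_monoid_onD:
  assumes "comm_monoid_on A"
  shows "zer A \<in> car A"
    "\<And>x y. x \<in> car A \<Longrightarrow> y \<in> car A \<Longrightarrow> add A x y \<in> car A"
    "\<And>x y z. x \<in> car A \<Longrightarrow> y \<in> car A \<Longrightarrow> z \<in> car A \<Longrightarrow> add A (add A x y) z = add A x (add A y z)"
    "\<And>x y. x \<in> car A \<Longrightarrow> y \<in> car A \<Longrightarrow> add A x y = add A y x"
    "\<And>x. x \<in> car A \<Longrightarrow> add A (zer A) x = x"
    "\<And>x. x \<in> car A \<Longrightarrow> add A x (zer A) = x"
  using assms unfolding comm_monoid_on_def by metis+

lemma comm_monoid_on_add_swap:
  assumes "comm_monoid_on A" "a \<in> car A" "b \<in> car A" "c \<in> car A" "d \<in> car A"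
  shows "add A (add A a b) (add A c d) = add A (add A a c) (add A b d)"
proof -
  note A = comm_monoid_onD[OF assms(1)]
  have "add A (add A a b) (add A c d) = add A a (add A b (add A c d))" using assms A by simp
  also have "add A b (add A c d) = add A c (add A b d)" using assms A by metis
  also have "add A a (add A c (add A b d)) = add A (add A a c) (add A b d)" using assms A by simp
  finally show ?thesis .
qed

lemma semimoduleD:
  assumes "semimodule M"
  shows "comm_monoid_on M"
    "\<And>s x. x \<in> car M \<Longrightarrow> smult M s x \<in> car M"
    "\<And>s x y. x \<in> car M \<Longrightarrow> y \<in> car M \<Longrightarrow> smult M s (add M x y) = add M (smult M s x) (smult M s y)"
    "\<And>x. x \<in> car M \<Longrightarrow> smult M 0 x = zer M"
    "\<And>s. smult M s (zer M) = zer M"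
  using assms unfolding semimodule_def by metis+

lemma slinear_zer:
  assumes "semimodule M" "semimodule N" "slinear M N h"
  shows "h (zer M) = zer N"
proof -
  have z: "zer M \<in> car M" using comm_monoid_onD(1)[OF semimoduleD(1)[OF assms(1)]] .
  have "h (zer M) = h (smult M 0 (zer M))" using semimoduleD(4)[OF assms(1) z] by simp
  also have "\<dots> = smult N 0 (h (zer M))" using assms(3) z unfolding slinear_def by blast
  also have "\<dots> = zer N" using assms(3) z semimoduleD(4)[OF assms(2)] unfolding slinear_def by blast
  finally show ?thesis .
qed

lemma slinear_comp:
  assumes "semimodule A" "slinear A B f" "slinear B C g"
  shows "slinear A C (\<lambda>x\<in>car A. g (f x))"
  using assms(2,3) comm_monoid_onD(2)[OF semimoduleD(1)[OF assms(1)]] semimoduleD(2)[OF assms(1)]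
  unfolding slinear_def by (auto simp: Pi_def)

lemma mon_hom_Ker_add:
  assumes "comm_monoid_on A" "comm_monoid_on B" "mon_hom A B \<phi>"
    "k \<in> Ker A B \<phi>" "k' \<in> Ker A B \<phi>"
  shows "add A k k' \<in> Ker A B \<phi>"
  using assms comm_monoid_onD[OF assms(1)] comm_monoid_onD[OF assms(2)]
  unfolding Ker_def mon_hom_def by auto

lemma surj_k_normal_iff_lifting:
  assumes A: "comm_monoid_on A" and B: "comm_monoid_on B" and \<phi>: "mon_hom A B \<phi>"
  shows "(\<phi> ` car A = car B \<and> k_normal A B \<phi>) \<longleftrightarrow>
    (\<forall>b\<in>car B. \<exists>a\<in>car A. \<phi> a = b \<and>
       (\<forall>a'\<in>car A. \<phi> a' = b \<longrightarrow>
          (\<exists>k\<in>car A. \<exists>k'\<in>car A. \<phi> k = zer B \<and> \<phi> k' = zer B \<and> add A a k = add A a' k')))"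
    (is "?exact \<longleftrightarrow> ?lifting")
proof
  assume ?exact
  then have surj: "\<phi> ` car A = car B" and kn: "k_normal A B \<phi>" by blast+
  show ?lifting
  proof
    fix b assume "b \<in> car B"
    then obtain a where a: "a \<in> car A" "\<phi> a = b" using surj by (metis imageE)
    have "\<exists>k\<in>car A. \<exists>k'\<in>car A. \<phi> k = zer B \<and> \<phi> k' = zer B \<and> add A a k = add A a' k'"
      if a': "a' \<in> car A" "\<phi> a' = b" for a'
    proof -
      obtain k k' where "k \<in> Ker A B \<phi>" "k' \<in> Ker A B \<phi>" "add A a k = add A a' k'"
        using kn a a' unfolding k_normal_def by metis
      then show ?thesis unfolding Ker_def by blast
    qed
    with a show "\<exists>a\<in>car A. \<phi> a = b \<and>
       (\<forall>a'\<in>car A. \<phi> a' = b \<longrightarrow>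
          (\<exists>k\<in>car A. \<exists>k'\<in>car A. \<phi> k = zer B \<and> \<phi> k' = zer B \<and> add A a k = add A a' k'))"
      by blast
  qed
next
  assume lift: ?lifting
  have "\<phi> ` car A \<subseteq> car B" using \<phi> unfolding mon_hom_def by blast
  moreover have "car B \<subseteq> \<phi> ` car A" using lift by fastforce
  moreover have "k_normal A B \<phi>" unfolding k_normal_def
  proof (intro ballI impI)
    fix x x' assume x: "x \<in> car A" and x': "x' \<in> car A" and eq: "\<phi> x = \<phi> x'"
    have "\<phi> x \<in> car B" using \<phi> x unfolding mon_hom_def by blast
    then obtain a where a: "a \<in> car A" and
      cong: "\<forall>a'\<in>car A. \<phi> a' = \<phi> x \<longrightarrow>
        (\<exists>k\<in>car A. \<exists>k'\<in>car A. \<phi> k = zer B \<and> \<phi> k' = zer B \<and> add A a k = add A a' k')"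
      using lift by (metis (no_types, lifting))
    obtain k1 k2 where c: "k1 \<in> car A" "k2 \<in> car A" and z: "\<phi> k1 = zer B" "\<phi> k2 = zer B"
      and e: "add A a k1 = add A x k2"
      using cong x by blast
    obtain k1' k2' where c': "k1' \<in> car A" "k2' \<in> car A" and z': "\<phi> k1' = zer B" "\<phi> k2' = zer B"
      and e': "add A a k1' = add A x' k2'"
      using cong x' eq by metis
    have k: "k1 \<in> Ker A B \<phi>" "k2 \<in> Ker A B \<phi>" and k': "k1' \<in> Ker A B \<phi>" "k2' \<in> Ker A B \<phi>"
      using c z c' z' unfolding Ker_def by auto
    note A' = comm_monoid_onD[OF A]
    \<comment> \<open>both x and x' are congruent to a, and congruence is additive\<close>
    have "add A x (add A k2 k1') = add A (add A x k2) k1'" using A'(3)[OF x c(2) c'(1)] by simp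
    also have "\<dots> = add A a (add A k1 k1')" using e A'(3)[OF a c(1) c'(1)] by simp
    also have "\<dots> = add A a (add A k1' k1)" using A'(4)[OF c(1) c'(1)] by simp
    also have "\<dots> = add A (add A a k1') k1" using A'(3)[OF a c'(1) c(1)] by simp
    also have "\<dots> = add A x' (add A k2' k1)" using e' A'(3)[OF x' c'(2) c(1)] by simp
    finally show "\<exists>k\<in>Ker A B \<phi>. \<exists>k'\<in>Ker A B \<phi>. add A x k = add A x' k'"
      using mon_hom_Ker_add[OF A B \<phi>] k k' by blast
  qed
  ultimately show ?exact by blast
qed

lemma Hom_simps:
  "car (Hom P X) = {h. slinear P X h \<and> h \<in> extensional (car P)}"
  "add (Hom P X) = (\<lambda>h k. \<lambda>x\<in>car P. add X (h x) (k x))"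
  "zer (Hom P X) = (\<lambda>x\<in>car P. zer X)"
  unfolding Hom_def by simp_all

lemma mem_Hom_iff: "h \<in> car (Hom P X) \<longleftrightarrow> slinear P X h \<and> h \<in> extensional (car P)"
  unfolding Hom_simps by simp

lemma Hom_apply_in_car: "h \<in> car (Hom P X) \<Longrightarrow> x \<in> car P \<Longrightarrow> h x \<in> car X"
  unfolding mem_Hom_iff slinear_def by auto

lemma slinear_add:
  assumes P: "semimodule P" and X: "semimodule X" and "slinear P X h" "slinear P X k"
  shows "slinear P X (\<lambda>x\<in>car P. add X (h x) (k x))"
  using assms comm_monoid_onD[OF semimoduleD(1)[OF P]] comm_monoid_onD[OF semimoduleD(1)[OF X]]
    semimoduleD[OF P] semimoduleD[OF X] comm_monoid_on_add_swap[OF semimoduleD(1)[OF X]]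
  unfolding slinear_def by (auto simp: Pi_def)

lemma slinear_zero_map:
  assumes "semimodule P" "semimodule X"
  shows "slinear P X (\<lambda>x\<in>car P. zer X)"
  using comm_monoid_onD[OF semimoduleD(1)[OF assms(1)]] comm_monoid_onD[OF semimoduleD(1)[OF assms(2)]]
    semimoduleD[OF assms(1)] semimoduleD[OF assms(2)]
  unfolding slinear_def by auto

lemma comm_monoid_on_Hom:
  assumes P: "semimodule P" and X: "semimodule X"
  shows "comm_monoid_on (Hom P X)"
  unfolding comm_monoid_on_def
proof (intro conjI ballI)
  note X' = comm_monoid_onD[OF semimoduleD(1)[OF X]]
  show "zer (Hom P X) \<in> car (Hom P X)"
    unfolding Hom_simps using slinear_zero_map[OF P X] by auto
  fix h k l assume h: "h \<in> car (Hom P X)" and k: "k \<in> car (Hom P X)" and l: "l \<in> car (Hom P X)"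
  note hkl = Hom_apply_in_car[OF h] Hom_apply_in_car[OF k] Hom_apply_in_car[OF l]
  show "add (Hom P X) h k \<in> car (Hom P X)"
    using h k slinear_add[OF P X] unfolding Hom_simps by auto
  show "add (Hom P X) (add (Hom P X) h k) l = add (Hom P X) h (add (Hom P X) k l)"
    unfolding Hom_simps using hkl X' by (auto intro!: restrict_ext)
  show "add (Hom P X) h k = add (Hom P X) k h"
    unfolding Hom_simps using hkl X' by (auto intro!: restrict_ext)
  show "add (Hom P X) (zer (Hom P X)) h = h"
    using h unfolding mem_Hom_iff Hom_simps
    by (intro extensionalityI[of _ "car P"]) (auto simp: X'(5)[OF hkl(1)])
qed

lemma postcomp_in_Hom:
  assumes "semimodule P" "slinear M N f" "h \<in> car (Hom P M)"
  shows "postcomp P f h \<in> car (Hom P N)"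
  using assms slinear_comp[of P M h N f] unfolding mem_Hom_iff postcomp_def by auto

lemma mon_hom_postcomp:
  assumes P: "semimodule P" and M: "semimodule M" and N: "semimodule N" and f: "slinear M N f"
  shows "mon_hom (Hom P M) (Hom P N) (postcomp P f)"
proof -
  have "postcomp P f (add (Hom P M) h k) = add (Hom P N) (postcomp P f h) (postcomp P f k)"
    if "h \<in> car (Hom P M)" "k \<in> car (Hom P M)" for h k
    using f Hom_apply_in_car[OF that(1)] Hom_apply_in_car[OF that(2)]
    unfolding Hom_simps(2) postcomp_def slinear_def
    by (auto intro!: restrict_ext)
  moreover have "postcomp P f (zer (Hom P M)) = zer (Hom P N)"
    unfolding Hom_simps postcomp_def using slinear_zer[OF M N f] by (auto intro!: restrict_ext)
  ultimately show ?thesis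
    unfolding mon_hom_def using postcomp_in_Hom[OF P f] by blast
qed

lemma inj_on_postcomp:
  assumes "inj_on f (car M)"
  shows "inj_on (postcomp P f) (car (Hom P M))"
proof (rule inj_onI)
  fix h k assume h: "h \<in> car (Hom P M)" and k: "k \<in> car (Hom P M)"
    and eq: "postcomp P f h = postcomp P f k"
  show "h = k"
  proof (rule extensionalityI[of _ "car P"])
    show "h \<in> extensional (car P)" "k \<in> extensional (car P)" using h k mem_Hom_iff by auto
    fix x assume x: "x \<in> car P"
    have "f (h x) = f (k x)" using fun_cong[OF eq, of x] x unfolding postcomp_def by simp
    then show "h x = k x"
      using assms Hom_apply_in_car[OF h x] Hom_apply_in_car[OF k x] unfolding inj_on_def by blast
  qed
qed

lemma slinear_inv_into:
  assumes L: "semimodule L" and P: "semimodule P"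
    and f: "slinear L M f" "inj_on f (car L)"
    and u: "slinear P M u" "u ` car P \<subseteq> f ` car L"
  shows "slinear P L (\<lambda>x\<in>car P. inv_into (car L) f (u x))" (is "slinear P L ?h")
proof -
  have h_in: "?h x \<in> car L" and f_h: "f (?h x) = u x" if "x \<in> car P" for x
    using that u(2) by (auto simp: image_subset_iff inv_into_into f_inv_into_f)
  have cancel: "?h y = z" if "y \<in> car P" "z \<in> car L" "f z = u y" for y z
    using that f(2) h_in f_h unfolding inj_on_def by metis
  have "?h (add P x y) = add L (?h x) (?h y)" if "x \<in> car P" "y \<in> car P" for x y
    using that h_in f_h f(1) u(1) comm_monoid_onD(2)[OF semimoduleD(1)[OF P]]
      comm_monoid_onD(2)[OF semimoduleD(1)[OF L]]
    by (intro cancel) (auto simp: slinear_def)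
  moreover have "?h (smult P s x) = smult L s (?h x)" if "x \<in> car P" for s x
    using that h_in f_h f(1) u(1) semimoduleD(2)[OF P] semimoduleD(2)[OF L]
    by (intro cancel) (auto simp: slinear_def)
  ultimately show ?thesis unfolding slinear_def using h_in by auto
qed

lemma postcomp_image_eq_Ker:
  assumes P: "semimodule P" and L: "semimodule L"
    and f: "slinear L M f" "inj_on f (car L)" and g: "slinear M N g"
    and im: "f ` car L = Ker M N g"
  shows "postcomp P f ` car (Hom P L) = Ker (Hom P M) (Hom P N) (postcomp P g)"
proof
  show "postcomp P f ` car (Hom P L) \<subseteq> Ker (Hom P M) (Hom P N) (postcomp P g)"
  proof safe
    fix h assume h: "h \<in> car (Hom P L)"
    have "g (f (h x)) = zer N" if "x \<in> car P" for x
      using im Hom_apply_in_car[OF h that] unfolding Ker_def by blast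
    then show "postcomp P f h \<in> Ker (Hom P M) (Hom P N) (postcomp P g)"
      unfolding Ker_def using postcomp_in_Hom[OF P f(1) h]
      by (auto simp: postcomp_def Hom_simps intro!: restrict_ext)
  qed
next
  show "Ker (Hom P M) (Hom P N) (postcomp P g) \<subseteq> postcomp P f ` car (Hom P L)"
  proof
    fix u assume "u \<in> Ker (Hom P M) (Hom P N) (postcomp P g)"
    then have u: "u \<in> car (Hom P M)" and gu: "postcomp P g u = zer (Hom P N)"
      unfolding Ker_def by auto
    have "g (u x) = zer N" if "x \<in> car P" for x
      using fun_cong[OF gu, of x] that unfolding postcomp_def Hom_simps by simp
    then have u_f: "u ` car P \<subseteq> f ` car L"
      using im Hom_apply_in_car[OF u] unfolding Ker_def by blast
    define h where "h = (\<lambda>x\<in>car P. inv_into (car L) f (u x))"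
    have "h \<in> car (Hom P L)"
      using slinear_inv_into[OF L P f] u u_f unfolding mem_Hom_iff h_def by simp
    moreover have "postcomp P f h = u"
      using u u_f unfolding mem_Hom_iff
      by (intro extensionalityI[of _ "car P"]) (auto simp: h_def postcomp_def f_inv_into_f)
    ultimately show "u \<in> postcomp P f ` car (Hom P L)" by blast
  qed
qed

lemma semimodule_Ker:
  assumes M: "semimodule M" and N: "semimodule N" and f: "slinear M N f"
  shows "semimodule (M\<lparr>car := Ker M N f\<rparr>)"
proof -
  note M' = comm_monoid_onD[OF semimoduleD(1)[OF M]] and N' = comm_monoid_onD[OF semimoduleD(1)[OF N]]
  have "zer M \<in> Ker M N f" unfolding Ker_def using slinear_zer[OF M N f] M' by simp
  moreover have "add M x y \<in> Ker M N f" if "x \<in> Ker M N f" "y \<in> Ker M N f" for x y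
    using that f M' N' unfolding Ker_def slinear_def by auto
  moreover have "smult M s x \<in> Ker M N f" if "x \<in> Ker M N f" for s x
    using that f semimoduleD(2)[OF M] semimoduleD(5)[OF N] unfolding Ker_def slinear_def by auto
  moreover have "Ker M N f \<subseteq> car M" unfolding Ker_def by auto
  moreover have K: "car (M\<lparr>car := Ker M N f\<rparr>) = Ker M N f" "add (M\<lparr>car := Ker M N f\<rparr>) = add M"
    "zer (M\<lparr>car := Ker M N f\<rparr>) = zer M" "smult (M\<lparr>car := Ker M N f\<rparr>) = smult M"
    by simp_all
  ultimately show ?thesis using M unfolding semimodule_def comm_monoid_on_def K by (meson subsetD)
qed

lemma ses_sm_Ker_inclusion:
  assumes "semimodule M" "semimodule N" "normal_epi M N f"
  shows "ses_sm (M\<lparr>car := Ker M N f\<rparr>) M N id f"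
  using assms semimodule_Ker[of M N f]
  unfolding ses_sm_def exact_conds_def normal_epi_def slinear_def Ker_def by auto

lemma M_e_projective_if_normally_M_projective:
  fixes P :: "('p, 's::semiring_1) semimodule" and M :: "('m, 's) semimodule"
  assumes P: "semimodule P" and M: "semimodule M" and nP: "normally_M_projective TYPE('n) P M"
  shows "M_e_projective TYPE('l) TYPE('n) P M"
  unfolding M_e_projective_def
proof (intro allI impI)
  fix L :: "('l, 's) semimodule" and N :: "('n, 's) semimodule" and f g
  assume "ses_sm L M N f g"
  then have L: "semimodule L" and N: "semimodule N" and f: "slinear L M f" "inj_on f (car L)"
    and g: "slinear M N g" and im: "f ` car L = Ker M N g" and ne: "normal_epi M N g"
    unfolding ses_sm_def exact_conds_def normal_epi_def by auto
  have "postcomp P g ` car (Hom P M) = car (Hom P N) \<and> k_normal (Hom P M) (Hom P N) (postcomp P g)"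
    unfolding surj_k_normal_iff_lifting[OF comm_monoid_on_Hom[OF P M] comm_monoid_on_Hom[OF P N]
        mon_hom_postcomp[OF P M N g]]
    using nP N ne unfolding normally_M_projective_def by blast
  then show "ses_mon (Hom P L) (Hom P M) (Hom P N) (postcomp P f) (postcomp P g)"
    unfolding ses_mon_def exact_conds_def
    using comm_monoid_on_Hom[OF P L] comm_monoid_on_Hom[OF P M] comm_monoid_on_Hom[OF P N]
      mon_hom_postcomp[OF P L M f(1)] mon_hom_postcomp[OF P M N g]
      inj_on_postcomp[OF f(2)] postcomp_image_eq_Ker[OF P L f g im]
    by blast
qed

lemma normally_M_projective_if_M_e_projective:
  fixes P :: "('p, 's::semiring_1) semimodule" and M :: "('m, 's) semimodule"
  assumes P: "semimodule P" and M: "semimodule M" and eP: "M_e_projective TYPE('m) TYPE('n) P M"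
  shows "normally_M_projective TYPE('n) P M"
  unfolding normally_M_projective_def
proof (intro allI impI)
  fix N :: "('n, 's) semimodule" and f g
  assume N: "semimodule N" and ne: "normal_epi M N f" and "g \<in> car (Hom P N)"
  have "ses_mon (Hom P (M\<lparr>car := Ker M N f\<rparr>)) (Hom P M) (Hom P N) (postcomp P id) (postcomp P f)"
    using eP ses_sm_Ker_inclusion[OF M N ne] unfolding M_e_projective_def by blast
  then have "postcomp P f ` car (Hom P M) = car (Hom P N) \<and> k_normal (Hom P M) (Hom P N) (postcomp P f)"
    unfolding ses_mon_def exact_conds_def by blast
  moreover have "slinear M N f" using ne unfolding normal_epi_def by blast
  ultimately show "\<exists>h\<in>car (Hom P M). postcomp P f h = g \<and>
           (\<forall>h'\<in>car (Hom P M). postcomp P f h' = g \<longrightarrow>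
              (\<exists>h1\<in>car (Hom P M). \<exists>h2\<in>car (Hom P M).
                 postcomp P f h1 = zer (Hom P N) \<and> postcomp P f h2 = zer (Hom P N) \<and>
                 add (Hom P M) h h1 = add (Hom P M) h' h2))"
    using \<open>g \<in> car (Hom P N)\<close> surj_k_normal_iff_lifting[OF comm_monoid_on_Hom[OF P M]
        comm_monoid_on_Hom[OF P N] mon_hom_postcomp[OF P M N]]
    by blast
qed

theorem mainTheorem6:
  fixes P :: "('p, 's::semiring_1) semimodule"
  assumes "semimodule P"
  shows "(\<forall>M::('m, 's) semimodule. semimodule M \<longrightarrow>
            (normally_M_projective TYPE('n) P M \<longrightarrow> M_e_projective TYPE('l) TYPE('n) P M) \<and>
            (M_e_projective TYPE('m) TYPE('n) P M \<longrightarrow> normally_M_projective TYPE('n) P M)) \<and>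
         (normally_projective TYPE('m) TYPE('n) P \<longrightarrow> e_projective TYPE('l) TYPE('m) TYPE('n) P) \<and>
         (e_projective TYPE('m) TYPE('m) TYPE('n) P \<longrightarrow> normally_projective TYPE('m) TYPE('n) P)"
  using M_e_projective_if_normally_M_projective[OF assms] normally_M_projective_if_M_e_projective[OF assms]
  unfolding normally_projective_def e_projective_def by blast

end
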